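(* Let $\pi$ be a policy, $\gamma\in[0,1)$, and $q^*$ a probability density on $\mathcal{S}\times\mathcal{A}$. Assume that $d^{\pi,\gamma}(\bar s,\bar a)$, $d^{\pi,\gamma}(\bar s,\bar a\mid s,a)$, $\tilde d^{\pi,\gamma}(\bar s,\bar a)$ and $q^*(\bar s,\bar a)$ are strictly positive densities on their common support and that $$L:=\sup_{(\bar s,\bar a)}\left|\log \frac{d^{\pi,\gamma}(\bar s,\bar a)}{q^*(\bar s,\bar a)}\right|<\infty .$$ Then $$\mathbb{E}_{(s,a)\sim d^{\pi,\gamma}(\cdot,\cdot)}\Big[-\mathrm{KL}_{\bar s,\bar a}\big(d^{\pi,\gamma}(\bar s,\bar a\mid s,a)\,\|\,q^*(\bar s,\bar a)\big)\Big]\le -\mathrm{KL}_{\bar s,\bar a}\big(d^{\pi,\gamma}(\bar s,\bar a)\,\|\,q^*(\bar s,\bar a)\big)+L\sqrt{2\,\mathrm{KL}_{\bar s,\bar a}\big(d^{\pi,\gamma}(\bar s,\bar a)\,\|\,\tilde d^{\pi,\gamma}(\bar s,\bar a)\big)}.$$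
   Context: Consider an infinite-horizon Markov decision process with state space $\mathcal{S}$, action space $\mathcal{A}$, initial state density $p_0$, transition density $p(s'\mid s,a)$, and discount factor $\gamma\in[0,1)$; a policy $\pi(a\mid s)$ is a conditional density over actions. (Densities are with respect to fixed reference measures, e.g. counting measure in the discrete case.) For $\Delta\ge 1$, $p^\pi_\Delta(\bar s\mid s,a)$ denotes the density of the state $s_\Delta$ when $s_0=s$, $a_0=a$, $a_t\sim\pi(\cdot\mid s_t)$ and $s_{t+1}\sim p(\cdot\mid s_t,a_t)$. The conditional state-action visitation distribution is $$d^{\pi,\gamma}(\bar s,\bar a\mid s,a)=(1-\gamma)\,\pi(\bar a\mid\bar s)\sum_{\Delta=1}^\infty\gamma^{\Delta-1}p^\pi_\Delta(\bar s\mid s,a).$$ The marginal (discounted) state-action visitation distribution is $d^{\pi,\gamma}(\bar s,\bar a)=(1-\gamma)\pi(\bar a\mid\bar s)\sum_{t=0}^\infty\gamma^t p^\pi_t(\bar s)$, where $p^\pi_t$ is the density of $s_t$ when $s_0\sim p_0$ and actions follow $\pi$. Finally $\tilde d^{\pi,\gamma}(\bar s,\bar a)=\mathbb{E}_{(s,a)\sim d^{\pi,\gamma}(\cdot,\cdot)}\big[d^{\pi,\gamma}(\bar s,\bar a\mid s,a)\big]$. $\mathrm{KL}$ denotes the Kullback–Leibler divergence. *)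

theory Defs
  imports "HOL-Probability.Probability"
begin

text \<open>General MDP with densities w.r.t. reference measures Ms (states) and Ma (actions).
  p0 s = initial density, P s a s' = p(s' | s,a), pol s a = pi(a | s).\<close>

fun state_dens :: "'s measure \<Rightarrow> 'a measure \<Rightarrow> ('s \<Rightarrow> real) \<Rightarrow> ('s \<Rightarrow> 'a \<Rightarrow> 's \<Rightarrow> real)
    \<Rightarrow> ('s \<Rightarrow> 'a \<Rightarrow> real) \<Rightarrow> nat \<Rightarrow> 's \<Rightarrow> ennreal" where
  "state_dens Ms Ma p0 P pol 0 = (\<lambda>s. ennreal (p0 s))"
| "state_dens Ms Ma p0 P pol (Suc t) =
     (\<lambda>s'. \<integral>\<^sup>+ s. \<integral>\<^sup>+ a. state_dens Ms Ma p0 P pol t s * ennreal (pol s a * P s a s') \<partial>Ma \<partial>Ms)"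

text \<open>cond_state_dens ... k s a sbar = p^pi_Delta(sbar | s,a) with Delta = k + 1.\<close>
fun cond_state_dens :: "'s measure \<Rightarrow> 'a measure \<Rightarrow> ('s \<Rightarrow> 'a \<Rightarrow> 's \<Rightarrow> real)
    \<Rightarrow> ('s \<Rightarrow> 'a \<Rightarrow> real) \<Rightarrow> nat \<Rightarrow> 's \<Rightarrow> 'a \<Rightarrow> 's \<Rightarrow> ennreal" where
  "cond_state_dens Ms Ma P pol 0 = (\<lambda>s a sb. ennreal (P s a sb))"
| "cond_state_dens Ms Ma P pol (Suc k) =
     (\<lambda>s a sb. \<integral>\<^sup>+ s'. \<integral>\<^sup>+ a'. cond_state_dens Ms Ma P pol k s a s' * ennreal (pol s' a' * P s' a' sb) \<partial>Ma \<partial>Ms)"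

definition visit :: "'s measure \<Rightarrow> 'a measure \<Rightarrow> ('s \<Rightarrow> real) \<Rightarrow> ('s \<Rightarrow> 'a \<Rightarrow> 's \<Rightarrow> real)
    \<Rightarrow> ('s \<Rightarrow> 'a \<Rightarrow> real) \<Rightarrow> real \<Rightarrow> 's \<times> 'a \<Rightarrow> ennreal" where
  "visit Ms Ma p0 P pol \<gamma> = (\<lambda>(sb, ab).
     ennreal ((1 - \<gamma>) * pol sb ab) * (\<Sum>t. ennreal (\<gamma> ^ t) * state_dens Ms Ma p0 P pol t sb))"

definition cond_visit :: "'s measure \<Rightarrow> 'a measure \<Rightarrow> ('s \<Rightarrow> 'a \<Rightarrow> 's \<Rightarrow> real)
    \<Rightarrow> ('s \<Rightarrow> 'a \<Rightarrow> real) \<Rightarrow> real \<Rightarrow> 's \<times> 'a \<Rightarrow> 's \<times> 'a \<Rightarrow> ennreal" where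
  "cond_visit Ms Ma P pol \<gamma> = (\<lambda>(s, a) (sb, ab).
     ennreal ((1 - \<gamma>) * pol sb ab) * (\<Sum>k. ennreal (\<gamma> ^ k) * cond_state_dens Ms Ma P pol k s a sb))"

definition tilde_visit :: "'s measure \<Rightarrow> 'a measure \<Rightarrow> ('s \<Rightarrow> real) \<Rightarrow> ('s \<Rightarrow> 'a \<Rightarrow> 's \<Rightarrow> real)
    \<Rightarrow> ('s \<Rightarrow> 'a \<Rightarrow> real) \<Rightarrow> real \<Rightarrow> 's \<times> 'a \<Rightarrow> ennreal" where
  "tilde_visit Ms Ma p0 P pol \<gamma> = (\<lambda>y.
     \<integral>\<^sup>+ z. visit Ms Ma p0 P pol \<gamma> z * cond_visit Ms Ma P pol \<gamma> z y \<partial>(Ms \<Otimes>\<^sub>M Ma))"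

definition KL_dens :: "'b measure \<Rightarrow> ('b \<Rightarrow> real) \<Rightarrow> ('b \<Rightarrow> real) \<Rightarrow> ereal" where
  "KL_dens M f g = (if integrable M (\<lambda>x. f x * ln (f x / g x))
      then ereal (\<integral>x. f x * ln (f x / g x) \<partial>M) else \<infinity>)"

end

(* Let h = ln (d / q), which is bounded by L. For every start pair z, Gibbs' inequality
   KL(d(.|z) || q) - E_{d(.|z)}[h] = KL(d(.|z) || d) >= 0 bounds the KL divergence of the
   conditional visitation from below; averaging over z ~ d and using Fubini, the expected
   divergence is at least E_{tilde d}[h]. Replacing tilde d by d changes E[h] by at most
   L ||d - tilde d||_1, while E_d[h] = KL(d || q) and Pinsker's inequality gives
   ||d - tilde d||_1 <= sqrt (2 KL(d || tilde d)). *)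

theory Submission
  imports Defs
begin

lemma ln_ge_rational:
  fixes t :: real
  assumes "0 < t"
  shows "(t - 1) * (5 * t + 1) / (2 * t * (t + 2)) \<le> ln t"
proof -
  define g where "g t = ln t - (t - 1) * (5 * t + 1) / (2 * t * (t + 2))" for t :: real
  have g': "0 < x \<Longrightarrow> (g has_real_derivative (x - 1) ^ 3 / (x\<^sup>2 * (x + 2)\<^sup>2)) (at x)" for x
    unfolding g_def
    apply (rule derivative_eq_intros refl | simp)+
    apply (simp add: divide_simps)
    apply (simp add: algebra_simps power2_eq_square power3_eq_cube)
    done
  have "g 1 \<le> g t"
  proof (cases "1 \<le> t")
    case True
    show ?thesis
    proof (rule DERIV_nonneg_imp_nondecreasing[OF True])
      fix x :: real assume "1 \<le> x" "x \<le> t"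
      then show "\<exists>y. (g has_real_derivative y) (at x) \<and> 0 \<le> y"
        using g'[of x] by (intro exI conjI) auto
    qed
  next
    case False
    show ?thesis
    proof (rule DERIV_nonpos_imp_nonincreasing[of t 1 g])
      fix x :: real assume "t \<le> x" "x \<le> 1"
      then show "\<exists>y. (g has_real_derivative y) (at x) \<and> y \<le> 0"
        using g'[of x] assms
        by (intro exI conjI) (auto intro!: divide_nonpos_nonneg simp: power_le_zero_eq_numeral)
    qed (use False in simp)
  qed
  then show ?thesis by (simp add: g_def)
qed

lemma sq_diff_one_le_xlnx:
  fixes t :: real
  assumes "0 < t"
  shows "3 * (t - 1)\<^sup>2 \<le> (2 * t + 4) * (t * ln t - t + 1)"
proof -
  have "(t - 1) * (5 * t + 1) \<le> ln t * (2 * t * (t + 2))"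
    using ln_ge_rational[OF assms] assms by (simp add: pos_divide_le_eq)
  then show ?thesis by (simp add: power2_eq_square algebra_simps)
qed

lemma diff_le_mult_ln_div:
  fixes x y :: real
  assumes "0 < x" "0 < y"
  shows "x - y \<le> x * ln (x / y)"
proof -
  have "ln (y / x) \<le> y / x - 1"
    using assms by (intro ln_le_minus_one) simp
  then show ?thesis
    using assms by (simp add: ln_div field_simps)
qed

lemma mult_abs_le_weighted_AM_GM:
  fixes x A \<phi> l :: real
  assumes "x\<^sup>2 \<le> A * \<phi>" "0 \<le> A" "0 \<le> \<phi>"
  shows "2 * l * \<bar>x\<bar> \<le> l\<^sup>2 * A + \<phi>"
proof (rule power2_le_imp_le)
  have "(2 * l * \<bar>x\<bar>)\<^sup>2 \<le> 4 * (l\<^sup>2 * A) * \<phi>"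
    using assms(1) by (simp add: power_mult_distrib mult_left_mono)
  also have "\<dots> = (l\<^sup>2 * A + \<phi>)\<^sup>2 - (l\<^sup>2 * A - \<phi>)\<^sup>2"
    by (simp add: power2_eq_square algebra_simps)
  also have "\<dots> \<le> (l\<^sup>2 * A + \<phi>)\<^sup>2"
    by simp
  finally show "(2 * l * \<bar>x\<bar>)\<^sup>2 \<le> (l\<^sup>2 * A + \<phi>)\<^sup>2" .
qed (use assms in simp)

lemma pinsker_pointwise:
  fixes a b l :: real
  assumes "0 < a" "0 < b"
  shows "2 * l * \<bar>a - b\<bar> \<le> l\<^sup>2 * (2 * a + 4 * b) / 3 + (a * ln (a / b) - a + b)"
proof -
  define t where "t = a / b"
  have t: "0 < t" and a: "a = b * t"
    using assms by (simp_all add: t_def)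
  have "2 * l * \<bar>t - 1\<bar> \<le> l\<^sup>2 * ((2 * t + 4) / 3) + (t * ln t - t + 1)"
    using sq_diff_one_le_xlnx[OF t] diff_le_mult_ln_div[of t 1] t
    by (intro mult_abs_le_weighted_AM_GM) simp_all
  then have "b * (2 * l * \<bar>t - 1\<bar>) \<le> b * (l\<^sup>2 * ((2 * t + 4) / 3) + (t * ln t - t + 1))"
    using assms by (simp add: mult_left_mono)
  moreover have "\<bar>a - b\<bar> = \<bar>b\<bar> * \<bar>t - 1\<bar>"
    unfolding a by (simp add: abs_mult[symmetric] algebra_simps)
  ultimately show ?thesis
    using assms by (simp add: a t_def[symmetric] algebra_simps)
qed

lemma integrable_mult_bounded:
  fixes f h :: "'b \<Rightarrow> real"
  assumes f: "integrable M f" and [measurable]: "h \<in> borel_measurable M"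
    and h: "\<And>x. x \<in> space M \<Longrightarrow> \<bar>h x\<bar> \<le> L"
  shows "integrable M (\<lambda>x. f x * h x)"
proof (rule Bochner_Integration.integrable_bound)
  show "integrable M (\<lambda>x. L * \<bar>f x\<bar>)"
    using f by simp
  show "AE x in M. norm (f x * h x) \<le> norm (L * \<bar>f x\<bar>)"
  proof (rule AE_I2)
    fix x assume "x \<in> space M"
    then have "\<bar>h x\<bar> \<le> \<bar>L\<bar>"
      using h by (meson abs_ge_self order_trans)
    then have "\<bar>f x\<bar> * \<bar>h x\<bar> \<le> \<bar>f x\<bar> * \<bar>L\<bar>"
      by (rule mult_left_mono) simp
    then show "norm (f x * h x) \<le> norm (L * \<bar>f x\<bar>)"
      by (simp add: abs_mult mult.commute)
  qed
qed (use f in simp)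

lemma integral_mult_diff_le:
  fixes f g h :: "'b \<Rightarrow> real"
  assumes f: "integrable M f" and g: "integrable M g" and hm: "h \<in> borel_measurable M"
    and h: "\<And>x. x \<in> space M \<Longrightarrow> \<bar>h x\<bar> \<le> L"
  shows "(\<integral>x. f x * h x \<partial>M) - (\<integral>x. g x * h x \<partial>M) \<le> L * (\<integral>x. \<bar>f x - g x\<bar> \<partial>M)"
proof -
  have fh: "integrable M (\<lambda>x. f x * h x)" and gh: "integrable M (\<lambda>x. g x * h x)"
    using integrable_mult_bounded[OF f hm h] integrable_mult_bounded[OF g hm h] by simp_all
  have "(\<integral>x. f x * h x - g x * h x \<partial>M) \<le> (\<integral>x. L * \<bar>f x - g x\<bar> \<partial>M)"
  proof (rule integral_mono)
    fix x assume "x \<in> space M"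
    have "(f x - g x) * h x \<le> \<bar>f x - g x\<bar> * \<bar>h x\<bar>"
      by (metis abs_ge_self abs_mult)
    also have "\<dots> \<le> \<bar>f x - g x\<bar> * L"
      using h[OF \<open>x \<in> space M\<close>] by (simp add: mult_left_mono)
    finally show "f x * h x - g x * h x \<le> L * \<bar>f x - g x\<bar>"
      by (simp add: algebra_simps)
  qed (use f g fh gh in simp_all)
  then show ?thesis
    using fh gh by simp
qed

lemma integral_le_nn_integral:
  fixes f :: "'b \<Rightarrow> real"
  shows "ereal (integral\<^sup>L M f) \<le> enn2ereal (\<integral>\<^sup>+ x. ennreal (f x) \<partial>M)"
proof (cases "\<integral>\<^sup>+ x. ennreal (f x) \<partial>M" rule: ennreal_cases)
  case (real r)
  then have "integral\<^sup>L M f \<le> r"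
    by (intro integral_real_bounded) simp_all
  then show ?thesis
    using real by simp
qed simp

lemma density_integrable:
  fixes f :: "'b \<Rightarrow> real"
  assumes "f \<in> borel_measurable M" "\<And>x. x \<in> space M \<Longrightarrow> 0 \<le> f x"
    and "(\<integral>\<^sup>+ x. ennreal (f x) \<partial>M) = 1"
  shows "integrable M f" "integral\<^sup>L M f = 1"
proof -
  have "AE x in M. 0 \<le> f x"
    using assms(2) by (rule AE_I2)
  then show "integrable M f" "integral\<^sup>L M f = 1"
    using nn_integral_eq_integrable[OF assms(1), of 1] assms(3) by simp_all
qed

lemma pinsker_inequality:
  fixes f g :: "'b \<Rightarrow> real"
  assumes f: "integrable M f" "integral\<^sup>L M f = 1" and g: "integrable M g" "integral\<^sup>L M g = 1"
    and pos: "\<And>x. x \<in> space M \<Longrightarrow> 0 < f x \<and> 0 < g x"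
    and KL: "integrable M (\<lambda>x. f x * ln (f x / g x))"
  shows "(\<integral>x. \<bar>f x - g x\<bar> \<partial>M) \<le> sqrt (2 * (\<integral>x. f x * ln (f x / g x) \<partial>M))"
proof -
  define T where "T = (\<integral>x. \<bar>f x - g x\<bar> \<partial>M)"
  define \<kappa> where "\<kappa> = (\<integral>x. f x * ln (f x / g x) \<partial>M)"
  have "2 * l * T \<le> 2 * l\<^sup>2 + \<kappa>" for l
  proof -
    have "(\<integral>x. 2 * l * \<bar>f x - g x\<bar> \<partial>M)
        \<le> (\<integral>x. l\<^sup>2 * (2 * f x + 4 * g x) / 3 + (f x * ln (f x / g x) - f x + g x) \<partial>M)"
      using f g KL pos by (intro integral_mono) (auto intro!: pinsker_pointwise)
    then show ?thesis
      using f g KL by (simp add: T_def \<kappa>_def)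
  qed
  from this[of "T / 2"] have "T\<^sup>2 \<le> 2 * \<kappa>"
    by (simp add: power2_eq_square)
  then show ?thesis
    unfolding T_def \<kappa>_def by (rule real_le_rsqrt)
qed

lemma KL_dens_ge_integral_ln_ratio:
  fixes f g q :: "'b \<Rightarrow> real"
  assumes f: "integrable M f" "integral\<^sup>L M f = 1" and g: "integrable M g" "integral\<^sup>L M g = 1"
    and pos: "\<And>x. x \<in> space M \<Longrightarrow> 0 < f x \<and> 0 < g x \<and> 0 < q x"
    and fgq: "integrable M (\<lambda>x. f x * ln (g x / q x))"
  shows "ereal (\<integral>x. f x * ln (g x / q x) \<partial>M) \<le> KL_dens M f q"
proof (cases "integrable M (\<lambda>x. f x * ln (f x / q x))")
  case True
  have "(\<integral>x. f x * ln (g x / q x) \<partial>M) = (\<integral>x. f x * ln (g x / q x) + (f x - g x) \<partial>M)"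
    using f g fgq by simp
  also have "\<dots> \<le> (\<integral>x. f x * ln (f x / q x) \<partial>M)"
  proof (rule integral_mono)
    fix x assume "x \<in> space M"
    then have fgq: "0 < f x" "0 < g x" "0 < q x"
      using pos by simp_all
    then have "f x - g x \<le> f x * ln (f x / g x)"
      by (intro diff_le_mult_ln_div)
    moreover have "ln (f x / q x) = ln (f x / g x) + ln (g x / q x)"
      using fgq by (simp add: ln_div)
    ultimately show "f x * ln (g x / q x) + (f x - g x) \<le> f x * ln (f x / q x)"
      by (simp add: distrib_left)
  qed (use f g fgq True in simp_all)
  finally show ?thesis
    using True by (simp add: KL_dens_def)
qed (simp add: KL_dens_def)

lemma pinsker_KL_dens:
  fixes f g :: "'b \<Rightarrow> real"
  assumes "integrable M f" "integral\<^sup>L M f = 1" "integrable M g" "integral\<^sup>L M g = 1"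
    and "\<And>x. x \<in> space M \<Longrightarrow> 0 < f x \<and> 0 < g x"
  shows "ereal (\<integral>x. \<bar>f x - g x\<bar> \<partial>M)
    \<le> (if KL_dens M f g = \<infinity> then \<infinity> else ereal (sqrt (2 * real_of_ereal (KL_dens M f g))))"
proof (cases "integrable M (\<lambda>x. f x * ln (f x / g x))")
  case True
  then show ?thesis
    using pinsker_inequality[OF assms True] by (simp add: KL_dens_def)
qed (simp add: KL_dens_def)

(* d, dc z and dt play the roles of d^{pi,gamma}, d^{pi,gamma}(.|z) and tilde d^{pi,gamma}. *)
locale density_mixture = sigma_finite_measure M
  for M :: "'b measure" +
  fixes d :: "'b \<Rightarrow> real" and dc :: "'b \<Rightarrow> 'b \<Rightarrow> real" and dt :: "'b \<Rightarrow> real"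
  assumes d_measurable[measurable]: "d \<in> borel_measurable M"
    and dc_measurable: "(\<lambda>(z, x). dc z x) \<in> borel_measurable (M \<Otimes>\<^sub>M M)"
    and d_pos: "x \<in> space M \<Longrightarrow> 0 < d x"
    and dc_pos: "z \<in> space M \<Longrightarrow> x \<in> space M \<Longrightarrow> 0 < dc z x"
    and dt_pos: "x \<in> space M \<Longrightarrow> 0 < dt x"
    and d_normalized: "(\<integral>\<^sup>+ x. ennreal (d x) \<partial>M) = 1"
    and dc_normalized: "z \<in> space M \<Longrightarrow> (\<integral>\<^sup>+ x. ennreal (dc z x) \<partial>M) = 1"
    and dt_mixture: "x \<in> space M \<Longrightarrow> (\<integral>\<^sup>+ z. ennreal (d z * dc z x) \<partial>M) = ennreal (dt x)"
begin

lemma measurable_dc[measurable (raw)]: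
  "f \<in> N \<rightarrow>\<^sub>M M \<Longrightarrow> g \<in> N \<rightarrow>\<^sub>M M \<Longrightarrow> (\<lambda>y. dc (f y) (g y)) \<in> borel_measurable N"
  using measurable_compose[OF measurable_Pair dc_measurable] by simp

lemma dt_measurable[measurable]: "dt \<in> borel_measurable M"
proof -
  have "(\<lambda>x. enn2real (\<integral>\<^sup>+ z. ennreal (d z * dc z x) \<partial>M)) \<in> borel_measurable M"
    by measurable
  then show ?thesis
    by (rule measurable_cong[THEN iffD1, rotated]) (simp add: dt_mixture dt_pos less_imp_le)
qed

lemma pair_sigma_finite_M: "pair_sigma_finite M M"
  by (simp add: pair_sigma_finite_def sigma_finite_measure_axioms)

lemma dt_normalized: "(\<integral>\<^sup>+ x. ennreal (dt x) \<partial>M) = 1"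
proof -
  have "(\<integral>\<^sup>+ x. ennreal (dt x) \<partial>M) = (\<integral>\<^sup>+ x. \<integral>\<^sup>+ z. ennreal (d z * dc z x) \<partial>M \<partial>M)"
    by (intro nn_integral_cong) (simp add: dt_mixture)
  also have "\<dots> = (\<integral>\<^sup>+ z. \<integral>\<^sup>+ x. ennreal (d z) * ennreal (dc z x) \<partial>M \<partial>M)"
    by (subst pair_sigma_finite.Fubini'[OF pair_sigma_finite_M])
      (measurable, auto intro!: nn_integral_cong ennreal_mult' less_imp_le d_pos)
  also have "\<dots> = (\<integral>\<^sup>+ z. ennreal (d z) \<partial>M)"
    by (intro nn_integral_cong) (simp add: nn_integral_cmult dc_normalized)
  finally show ?thesis
    using d_normalized by simp
qed

lemma d_integrable: "integrable M d" "integral\<^sup>L M d = 1"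
  using density_integrable[OF d_measurable _ d_normalized] d_pos by (auto intro: less_imp_le)

lemma dc_integrable: "z \<in> space M \<Longrightarrow> integrable M (dc z)" "z \<in> space M \<Longrightarrow> integral\<^sup>L M (dc z) = 1"
  using density_integrable[OF _ _ dc_normalized, of z] dc_pos by (auto intro: less_imp_le)

lemma dt_integrable: "integrable M dt" "integral\<^sup>L M dt = 1"
  using density_integrable[OF dt_measurable _ dt_normalized] dt_pos by (auto intro: less_imp_le)

lemma dt_eq_integral:
  assumes x: "x \<in> space M"
  shows "dt x = (\<integral>z. d z * dc z x \<partial>M)"
proof -
  have "(\<lambda>z. d z * dc z x) \<in> borel_measurable M"
    using x by measurable
  moreover have "AE z in M. 0 \<le> d z * dc z x"
    using d_pos dc_pos x by (intro AE_I2) (auto intro!: mult_nonneg_nonneg less_imp_le)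
  ultimately show ?thesis
    using nn_integral_eq_integrable dt_mixture[OF x] dt_pos[OF x] by (metis less_imp_le)
qed

lemma joint_density_integrable: "integrable (M \<Otimes>\<^sub>M M) (\<lambda>p. d (fst p) * dc (fst p) (snd p))"
proof -
  have "(\<integral>\<^sup>+ p. ennreal (d (fst p) * dc (fst p) (snd p)) \<partial>(M \<Otimes>\<^sub>M M))
      = (\<integral>\<^sup>+ z. \<integral>\<^sup>+ x. ennreal (d z) * ennreal (dc z x) \<partial>M \<partial>M)"
    by (subst nn_integral_fst[symmetric])
      (measurable, auto intro!: nn_integral_cong ennreal_mult' less_imp_le d_pos)
  also have "\<dots> = 1"
    using d_normalized by (simp add: nn_integral_cmult dc_normalized cong: nn_integral_cong)
  finally show ?thesis
    by (rule density_integrable(1)[rotated 2])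
      (measurable, auto simp: space_pair_measure intro!: less_imp_le mult_pos_pos d_pos dc_pos)
qed

lemma integral_mixture:
  fixes h :: "'b \<Rightarrow> real"
  assumes hm[measurable]: "h \<in> borel_measurable M" and h: "\<And>x. x \<in> space M \<Longrightarrow> \<bar>h x\<bar> \<le> L"
  shows "(\<integral>z. d z * (\<integral>x. dc z x * h x \<partial>M) \<partial>M) = (\<integral>x. dt x * h x \<partial>M)"
proof -
  have "integrable (M \<Otimes>\<^sub>M M) (\<lambda>p. d (fst p) * dc (fst p) (snd p) * h (snd p))"
    using joint_density_integrable
    by (rule integrable_mult_bounded) (auto simp: space_pair_measure intro: h)
  then have joint: "integrable (M \<Otimes>\<^sub>M M) (\<lambda>(z, x). d z * dc z x * h x)"
    by (simp add: case_prod_beta')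
  have "(\<integral>z. d z * (\<integral>x. dc z x * h x \<partial>M) \<partial>M) = (\<integral>x. \<integral>z. d z * dc z x * h x \<partial>M \<partial>M)"
    using pair_sigma_finite.Fubini_integral[OF pair_sigma_finite_M joint] by (simp add: mult.assoc)
  also have "\<dots> = (\<integral>x. dt x * h x \<partial>M)"
    by (intro Bochner_Integration.integral_cong) (simp_all add: dt_eq_integral)
  finally show ?thesis .
qed

lemma expected_KL_dens_ge_integral_ln_ratio:
  fixes q :: "'b \<Rightarrow> real" and L :: real
  assumes [measurable]: "q \<in> borel_measurable M" and q_pos: "\<And>x. x \<in> space M \<Longrightarrow> 0 < q x"
    and L: "\<And>x. x \<in> space M \<Longrightarrow> \<bar>ln (d x / q x)\<bar> \<le> L"
  shows "ereal (\<integral>x. dt x * ln (d x / q x) \<partial>M)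
    \<le> enn2ereal (\<integral>\<^sup>+ z. ennreal (d z) * e2ennreal (KL_dens M (dc z) q) \<partial>M)"
proof -
  define h where "h x = ln (d x / q x)" for x
  have hm[measurable]: "h \<in> borel_measurable M"
    unfolding h_def[abs_def] by measurable
  have h: "x \<in> space M \<Longrightarrow> \<bar>h x\<bar> \<le> L" for x
    using L by (simp add: h_def)
  have "ereal (\<integral>x. dt x * h x \<partial>M) = ereal (\<integral>z. d z * (\<integral>x. dc z x * h x \<partial>M) \<partial>M)"
    by (simp add: integral_mixture[OF hm h])
  also have "\<dots> \<le> enn2ereal (\<integral>\<^sup>+ z. ennreal (d z * (\<integral>x. dc z x * h x \<partial>M)) \<partial>M)"
    by (rule integral_le_nn_integral)
  also have "\<dots> \<le> enn2ereal (\<integral>\<^sup>+ z. ennreal (d z) * e2ennreal (KL_dens M (dc z) q) \<partial>M)"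
    unfolding less_eq_ennreal.rep_eq[symmetric]
  proof (rule nn_integral_mono)
    fix z assume z: "z \<in> space M"
    have "ereal (\<integral>x. dc z x * h x \<partial>M) \<le> KL_dens M (dc z) q"
      unfolding h_def
      using d_integrable dc_integrable[OF z] d_pos dc_pos[OF z] q_pos
      by (intro KL_dens_ge_integral_ln_ratio integrable_mult_bounded[OF _ hm h, unfolded h_def])
        simp_all
    then have "ennreal (\<integral>x. dc z x * h x \<partial>M) \<le> e2ennreal (KL_dens M (dc z) q)"
      using e2ennreal_mono by fastforce
    then show "ennreal (d z * (\<integral>x. dc z x * h x \<partial>M)) \<le> ennreal (d z) * e2ennreal (KL_dens M (dc z) q)"
      using d_pos[OF z] by (simp add: ennreal_mult' mult_left_mono)
  qed
  finally show ?thesis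
    unfolding h_def .
qed

theorem expected_KL_dens_lower_bound:
  fixes q :: "'b \<Rightarrow> real" and L :: real
  assumes [measurable]: "q \<in> borel_measurable M" and q_pos: "\<And>x. x \<in> space M \<Longrightarrow> 0 < q x"
    and L: "\<And>x. x \<in> space M \<Longrightarrow> \<bar>ln (d x / q x)\<bar> \<le> L"
  shows "- enn2ereal (\<integral>\<^sup>+ z. ennreal (d z) * e2ennreal (KL_dens M (dc z) q) \<partial>M)
    \<le> - KL_dens M d q
      + ereal L * (if KL_dens M d dt = \<infinity> then \<infinity> else ereal (sqrt (2 * real_of_ereal (KL_dens M d dt))))"
proof -
  define h where "h x = ln (d x / q x)" for x
  have hm[measurable]: "h \<in> borel_measurable M"
    unfolding h_def[abs_def] by measurable
  have h: "x \<in> space M \<Longrightarrow> \<bar>h x\<bar> \<le> L" for x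
    using L by (simp add: h_def)
  have "space M \<noteq> {}"
    using d_normalized nn_integral_empty by force
  then have L_nonneg: "0 \<le> L"
    using h abs_ge_zero order_trans by blast
  have "- enn2ereal (\<integral>\<^sup>+ z. ennreal (d z) * e2ennreal (KL_dens M (dc z) q) \<partial>M)
      \<le> - ereal (\<integral>x. dt x * h x \<partial>M)"
    using expected_KL_dens_ge_integral_ln_ratio[OF assms] by (simp only: h_def ereal_minus_le_minus)
  also have "\<dots> \<le> - ereal (\<integral>x. d x * h x \<partial>M) + ereal L * ereal (\<integral>x. \<bar>d x - dt x\<bar> \<partial>M)"
    using integral_mult_diff_le[OF d_integrable(1) dt_integrable(1) hm h] by simp
  also have "\<dots> \<le> - ereal (\<integral>x. d x * h x \<partial>M)
      + ereal L * (if KL_dens M d dt = \<infinity> then \<infinity> else ereal (sqrt (2 * real_of_ereal (KL_dens M d dt))))"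
    using d_integrable dt_integrable d_pos dt_pos L_nonneg
    by (intro add_left_mono ereal_mult_left_mono pinsker_KL_dens) simp_all
  also have "ereal (\<integral>x. d x * h x \<partial>M) = KL_dens M d q"
    using integrable_mult_bounded[OF d_integrable(1) hm h] by (simp add: KL_dens_def h_def)
  finally show ?thesis .
qed

end

locale mdp =
  fixes Ms :: "'s measure" and Ma :: "'a measure"
    and p0 :: "'s \<Rightarrow> real" and P :: "'s \<Rightarrow> 'a \<Rightarrow> 's \<Rightarrow> real" and pol :: "'s \<Rightarrow> 'a \<Rightarrow> real"
    and \<gamma> :: real
  assumes sigma_finite_S: "sigma_finite_measure Ms" and sigma_finite_A: "sigma_finite_measure Ma"
    and p0_measurable[measurable]: "p0 \<in> borel_measurable Ms"
    and p0_nonneg: "\<forall>s. 0 \<le> p0 s"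
    and p0_normalized: "(\<integral>\<^sup>+ s. ennreal (p0 s) \<partial>Ms) = 1"
    and P_measurable: "(\<lambda>x. P (fst x) (fst (snd x)) (snd (snd x))) \<in> borel_measurable (Ms \<Otimes>\<^sub>M (Ma \<Otimes>\<^sub>M Ms))"
    and P_nonneg: "\<forall>s a s'. 0 \<le> P s a s'"
    and P_normalized: "\<forall>s a. (\<integral>\<^sup>+ s'. ennreal (P s a s') \<partial>Ms) = 1"
    and pol_measurable: "(\<lambda>x. pol (fst x) (snd x)) \<in> borel_measurable (Ms \<Otimes>\<^sub>M Ma)"
    and pol_nonneg: "\<forall>s a. 0 \<le> pol s a"
    and pol_normalized: "\<forall>s. (\<integral>\<^sup>+ a. ennreal (pol s a) \<partial>Ma) = 1"
    and gamma: "0 \<le> \<gamma>" "\<gamma> < 1"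
begin

abbreviation "sd \<equiv> state_dens Ms Ma p0 P pol"
abbreviation "csd \<equiv> cond_state_dens Ms Ma P pol"
abbreviation "vis \<equiv> visit Ms Ma p0 P pol \<gamma>"
abbreviation "cvis \<equiv> cond_visit Ms Ma P pol \<gamma>"
abbreviation "tvis \<equiv> tilde_visit Ms Ma p0 P pol \<gamma>"

lemma sigma_finite_SA: "sigma_finite_measure (Ms \<Otimes>\<^sub>M Ma)"
  by (rule sigma_finite_pair_measure[OF sigma_finite_S sigma_finite_A])

lemma pair_sigma_finite_SS: "pair_sigma_finite Ms Ms"
  and pair_sigma_finite_AS: "pair_sigma_finite Ma Ms"
  using sigma_finite_S sigma_finite_A by (simp_all add: pair_sigma_finite_def)

lemmas [measurable (raw)] =
  sigma_finite_measure.borel_measurable_nn_integral[OF sigma_finite_S]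
  sigma_finite_measure.borel_measurable_nn_integral[OF sigma_finite_A]

lemma measurable_pol[measurable (raw)]:
  "f \<in> N \<rightarrow>\<^sub>M Ms \<Longrightarrow> g \<in> N \<rightarrow>\<^sub>M Ma \<Longrightarrow> (\<lambda>x. pol (f x) (g x)) \<in> borel_measurable N"
  using measurable_compose[OF measurable_Pair[of f N Ms g Ma] pol_measurable] by simp

lemma measurable_P[measurable (raw)]:
  "f \<in> N \<rightarrow>\<^sub>M Ms \<Longrightarrow> g \<in> N \<rightarrow>\<^sub>M Ma \<Longrightarrow> h \<in> N \<rightarrow>\<^sub>M Ms \<Longrightarrow>
    (\<lambda>x. P (f x) (g x) (h x)) \<in> borel_measurable N"
  using measurable_compose[OF measurable_Pair[OF _ measurable_Pair[of g N Ma h Ms]] P_measurable, of f]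
  by simp

lemma state_dens_measurable: "sd t \<in> borel_measurable Ms"
proof (induction t)
  case (Suc t)
  have [measurable]: "(\<lambda>x. sd t (snd (fst x))) \<in> borel_measurable ((Ms \<Otimes>\<^sub>M Ms) \<Otimes>\<^sub>M Ma)"
    by (rule measurable_compose[OF _ Suc.IH]) measurable
  show ?case
    by simp measurable
qed (simp; measurable)

lemma measurable_state_dens[measurable (raw)]:
  "f \<in> N \<rightarrow>\<^sub>M Ms \<Longrightarrow> (\<lambda>x. sd t (f x)) \<in> borel_measurable N"
  by (rule measurable_compose[OF _ state_dens_measurable])

lemma cond_state_dens_measurable:
  "(\<lambda>x. csd k (fst x) (fst (snd x)) (snd (snd x))) \<in> borel_measurable (Ms \<Otimes>\<^sub>M (Ma \<Otimes>\<^sub>M Ms))"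
proof (induction k)
  case (Suc k)
  have [measurable]: "(\<lambda>x. csd k (fst (fst (fst x))) (fst (snd (fst (fst x)))) (snd (fst x)))
      \<in> borel_measurable (((Ms \<Otimes>\<^sub>M (Ma \<Otimes>\<^sub>M Ms)) \<Otimes>\<^sub>M Ms) \<Otimes>\<^sub>M Ma)"
    using measurable_compose[OF _ Suc.IH,
        of "\<lambda>x. (fst (fst (fst x)), fst (snd (fst (fst x))), snd (fst x))"
        "((Ms \<Otimes>\<^sub>M (Ma \<Otimes>\<^sub>M Ms)) \<Otimes>\<^sub>M Ms) \<Otimes>\<^sub>M Ma"]
    by simp
  show ?case
    by simp measurable
qed (simp add: P_measurable)

lemma measurable_cond_state_dens[measurable (raw)]:
  "f \<in> N \<rightarrow>\<^sub>M Ms \<Longrightarrow> g \<in> N \<rightarrow>\<^sub>M Ma \<Longrightarrow> h \<in> N \<rightarrow>\<^sub>M Ms \<Longrightarrow>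
    (\<lambda>x. csd k (f x) (g x) (h x)) \<in> borel_measurable N"
  using measurable_compose[OF measurable_Pair[OF _ measurable_Pair[of g N Ma h Ms]]
      cond_state_dens_measurable, of f]
  by simp

lemma transition_normalized:
  assumes [measurable]: "\<mu> \<in> borel_measurable Ms" and \<mu>: "(\<integral>\<^sup>+ s. \<mu> s \<partial>Ms) = 1"
  shows "(\<integral>\<^sup>+ s'. \<integral>\<^sup>+ s. \<integral>\<^sup>+ a. \<mu> s * ennreal (pol s a * P s a s') \<partial>Ma \<partial>Ms \<partial>Ms) = 1"
proof -
  have "(\<integral>\<^sup>+ s'. \<integral>\<^sup>+ s. \<integral>\<^sup>+ a. \<mu> s * ennreal (pol s a * P s a s') \<partial>Ma \<partial>Ms \<partial>Ms)
      = (\<integral>\<^sup>+ s. \<integral>\<^sup>+ a. \<integral>\<^sup>+ s'. \<mu> s * ennreal (pol s a * P s a s') \<partial>Ms \<partial>Ma \<partial>Ms)"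
    by (subst pair_sigma_finite.Fubini'[OF pair_sigma_finite_SS], measurable)
      (intro nn_integral_cong pair_sigma_finite.Fubini'[OF pair_sigma_finite_AS], measurable)
  also have "\<dots> = (\<integral>\<^sup>+ s. \<integral>\<^sup>+ a. \<mu> s * ennreal (pol s a) * (\<integral>\<^sup>+ s'. ennreal (P s a s') \<partial>Ms) \<partial>Ma \<partial>Ms)"
    by (intro nn_integral_cong, subst nn_integral_cmult[symmetric])
      (auto simp: ennreal_mult pol_nonneg P_nonneg mult.assoc)
  also have "\<dots> = (\<integral>\<^sup>+ s. \<mu> s * (\<integral>\<^sup>+ a. ennreal (pol s a) \<partial>Ma) \<partial>Ms)"
    by (intro nn_integral_cong, subst nn_integral_cmult[symmetric]) (auto simp: P_normalized)
  finally show ?thesis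
    using \<mu> pol_normalized by simp
qed

lemma state_dens_normalized: "(\<integral>\<^sup>+ s. sd t s \<partial>Ms) = 1"
  by (induction t) (simp_all add: p0_normalized transition_normalized state_dens_measurable)

lemma cond_state_dens_normalized:
  assumes [measurable]: "s \<in> space Ms" "a \<in> space Ma"
  shows "(\<integral>\<^sup>+ s'. csd k s a s' \<partial>Ms) = 1"
  by (induction k) (simp_all add: P_normalized transition_normalized)

lemma discounted_visit_normalized:
  assumes [measurable]: "\<And>t. \<mu> t \<in> borel_measurable Ms" and \<mu>: "\<And>t. (\<integral>\<^sup>+ s. \<mu> t s \<partial>Ms) = 1"
  shows "(\<integral>\<^sup>+ x. ennreal ((1 - \<gamma>) * pol (fst x) (snd x)) * (\<Sum>t. ennreal (\<gamma> ^ t) * \<mu> t (fst x))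
    \<partial>(Ms \<Otimes>\<^sub>M Ma)) = 1"
proof -
  have "(\<integral>\<^sup>+ x. ennreal ((1 - \<gamma>) * pol (fst x) (snd x)) * (\<Sum>t. ennreal (\<gamma> ^ t) * \<mu> t (fst x))
      \<partial>(Ms \<Otimes>\<^sub>M Ma))
    = (\<integral>\<^sup>+ s. \<integral>\<^sup>+ a. ennreal (1 - \<gamma>) * (\<Sum>t. ennreal (\<gamma> ^ t) * \<mu> t s) * ennreal (pol s a) \<partial>Ma \<partial>Ms)"
    using gamma pol_nonneg
    by (subst sigma_finite_measure.nn_integral_fst[OF sigma_finite_A, symmetric], measurable)
      (auto intro!: nn_integral_cong simp: ennreal_mult mult_ac)
  also have "\<dots> = (\<integral>\<^sup>+ s. ennreal (1 - \<gamma>) * (\<Sum>t. ennreal (\<gamma> ^ t) * \<mu> t s) \<partial>Ms)"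
  proof (intro nn_integral_cong)
    fix s assume [measurable]: "s \<in> space Ms"
    show "(\<integral>\<^sup>+ a. ennreal (1 - \<gamma>) * (\<Sum>t. ennreal (\<gamma> ^ t) * \<mu> t s) * ennreal (pol s a) \<partial>Ma)
        = ennreal (1 - \<gamma>) * (\<Sum>t. ennreal (\<gamma> ^ t) * \<mu> t s)"
      by (simp add: nn_integral_cmult pol_normalized)
  qed
  also have "\<dots> = ennreal (1 - \<gamma>) * (\<integral>\<^sup>+ s. (\<Sum>t. ennreal (\<gamma> ^ t) * \<mu> t s) \<partial>Ms)"
    by (rule nn_integral_cmult) measurable
  also have "(\<integral>\<^sup>+ s. (\<Sum>t. ennreal (\<gamma> ^ t) * \<mu> t s) \<partial>Ms) = (\<Sum>t. ennreal (\<gamma> ^ t))"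
    by (simp add: nn_integral_suminf nn_integral_cmult \<mu>)
  also have "\<dots> = ennreal (1 / (1 - \<gamma>))"
    using gamma by (subst suminf_ennreal2) (auto intro!: summable_geometric simp: suminf_geometric)
  finally show ?thesis
    using gamma by (simp add: ennreal_mult[symmetric])
qed

lemma visit_eq:
  "vis x = ennreal ((1 - \<gamma>) * pol (fst x) (snd x)) * (\<Sum>t. ennreal (\<gamma> ^ t) * sd t (fst x))"
  by (cases x) (simp add: visit_def)

lemma cond_visit_eq:
  "cvis z x = ennreal ((1 - \<gamma>) * pol (fst x) (snd x)) * (\<Sum>k. ennreal (\<gamma> ^ k) * csd k (fst z) (snd z) (fst x))"
  by (cases z, cases x) (simp add: cond_visit_def)

lemma visit_normalized: "(\<integral>\<^sup>+ x. vis x \<partial>(Ms \<Otimes>\<^sub>M Ma)) = 1"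
  unfolding visit_eq
  by (rule discounted_visit_normalized) (simp_all add: state_dens_measurable state_dens_normalized)

lemma cond_visit_normalized:
  assumes "z \<in> space (Ms \<Otimes>\<^sub>M Ma)"
  shows "(\<integral>\<^sup>+ x. cvis z x \<partial>(Ms \<Otimes>\<^sub>M Ma)) = 1"
  unfolding cond_visit_eq
  using assms
  by (intro discounted_visit_normalized)
    (simp_all add: cond_state_dens_normalized space_pair_measure mem_Times_iff)

lemma visit_density_mixture:
  assumes vis_pos: "\<forall>x. 0 < vis x \<and> vis x < \<infinity>"
    and cvis_pos: "\<forall>z x. 0 < cvis z x \<and> cvis z x < \<infinity>"
    and tvis_pos: "\<forall>x. 0 < tvis x \<and> tvis x < \<infinity>"
  shows "density_mixture (Ms \<Otimes>\<^sub>M Ma)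
    (\<lambda>x. enn2real (vis x)) (\<lambda>z x. enn2real (cvis z x)) (\<lambda>x. enn2real (tvis x))"
proof -
  have vis: "0 < enn2real (vis x)" "ennreal (enn2real (vis x)) = vis x" for x
    using vis_pos[rule_format, of x] by (auto simp: enn2real_positive_iff top.not_eq_extremum)
  have cvis: "0 < enn2real (cvis z x)" "ennreal (enn2real (cvis z x)) = cvis z x" for z x
    using cvis_pos[rule_format, of z x] by (auto simp: enn2real_positive_iff top.not_eq_extremum)
  have tvis: "0 < enn2real (tvis x)" "ennreal (enn2real (tvis x)) = tvis x" for x
    using tvis_pos[rule_format, of x] by (auto simp: enn2real_positive_iff top.not_eq_extremum)
  show ?thesis
  proof (intro density_mixture.intro[OF sigma_finite_SA] density_mixture_axioms.intro)
    show "(\<lambda>x. enn2real (vis x)) \<in> borel_measurable (Ms \<Otimes>\<^sub>M Ma)"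
      unfolding visit_eq by measurable
    show "(\<lambda>(z, x). enn2real (cvis z x)) \<in> borel_measurable ((Ms \<Otimes>\<^sub>M Ma) \<Otimes>\<^sub>M (Ms \<Otimes>\<^sub>M Ma))"
      unfolding cond_visit_eq by measurable
    show "(\<integral>\<^sup>+ x. ennreal (enn2real (vis x)) \<partial>(Ms \<Otimes>\<^sub>M Ma)) = 1"
      by (simp add: vis visit_normalized)
    show "(\<integral>\<^sup>+ x. ennreal (enn2real (cvis z x)) \<partial>(Ms \<Otimes>\<^sub>M Ma)) = 1"
      if "z \<in> space (Ms \<Otimes>\<^sub>M Ma)" for z
      by (simp add: cvis cond_visit_normalized[OF that])
    show "(\<integral>\<^sup>+ z. ennreal (enn2real (vis z) * enn2real (cvis z x)) \<partial>(Ms \<Otimes>\<^sub>M Ma))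
        = ennreal (enn2real (tvis x))" for x
      by (simp add: ennreal_mult vis cvis tvis) (simp add: tilde_visit_def)
  qed (use vis cvis tvis in auto)
qed

end

theorem theorem1:
  fixes Ms :: "'s measure" and Ma :: "'a measure"
    and p0 :: "'s \<Rightarrow> real" and P :: "'s \<Rightarrow> 'a \<Rightarrow> 's \<Rightarrow> real" and pol :: "'s \<Rightarrow> 'a \<Rightarrow> real"
    and \<gamma> :: real and qs :: "'s \<times> 'a \<Rightarrow> real"
  assumes sfS: "sigma_finite_measure Ms" and sfA: "sigma_finite_measure Ma"
    and p0_meas: "p0 \<in> borel_measurable Ms"
    and p0_nonneg: "\<forall>s. 0 \<le> p0 s"
    and p0_int: "(\<integral>\<^sup>+ s. ennreal (p0 s) \<partial>Ms) = 1"
    and P_meas: "(\<lambda>x. P (fst x) (fst (snd x)) (snd (snd x))) \<in> borel_measurable (Ms \<Otimes>\<^sub>M (Ma \<Otimes>\<^sub>M Ms))"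
    and P_nonneg: "\<forall>s a s'. 0 \<le> P s a s'"
    and P_int: "\<forall>s a. (\<integral>\<^sup>+ s'. ennreal (P s a s') \<partial>Ms) = 1"
    and pol_meas: "(\<lambda>x. pol (fst x) (snd x)) \<in> borel_measurable (Ms \<Otimes>\<^sub>M Ma)"
    and pol_nonneg: "\<forall>s a. 0 \<le> pol s a"
    and pol_int: "\<forall>s. (\<integral>\<^sup>+ a. ennreal (pol s a) \<partial>Ma) = 1"
    and gamma: "0 \<le> \<gamma>" "\<gamma> < 1"
    and qs_meas: "qs \<in> borel_measurable (Ms \<Otimes>\<^sub>M Ma)"
    and qs_pos: "\<forall>x. 0 < qs x"
    and qs_int: "(\<integral>\<^sup>+ x. ennreal (qs x) \<partial>(Ms \<Otimes>\<^sub>M Ma)) = 1"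
    and d_pos: "\<forall>x. 0 < visit Ms Ma p0 P pol \<gamma> x \<and> visit Ms Ma p0 P pol \<gamma> x < \<infinity>"
    and dc_pos: "\<forall>z x. 0 < cond_visit Ms Ma P pol \<gamma> z x \<and> cond_visit Ms Ma P pol \<gamma> z x < \<infinity>"
    and dt_pos: "\<forall>x. 0 < tilde_visit Ms Ma p0 P pol \<gamma> x \<and> tilde_visit Ms Ma p0 P pol \<gamma> x < \<infinity>"
    and L_fin: "bdd_above (range (\<lambda>x. \<bar>ln (enn2real (visit Ms Ma p0 P pol \<gamma> x) / qs x)\<bar>))"
  shows
    "(let M = Ms \<Otimes>\<^sub>M Ma;
          d = (\<lambda>x. enn2real (visit Ms Ma p0 P pol \<gamma> x));
          dc = (\<lambda>z x. enn2real (cond_visit Ms Ma P pol \<gamma> z x));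
          dt = (\<lambda>x. enn2real (tilde_visit Ms Ma p0 P pol \<gamma> x));
          L = (SUP x. \<bar>ln (d x / qs x)\<bar>);
          KLdt = KL_dens M d dt
      in - enn2ereal (\<integral>\<^sup>+ z. ennreal (d z) * e2ennreal (KL_dens M (dc z) qs) \<partial>M)
         \<le> - KL_dens M d qs
           + ereal L * (if KLdt = \<infinity> then \<infinity> else ereal (sqrt (2 * real_of_ereal KLdt))))"
proof -
  interpret mdp Ms Ma p0 P pol \<gamma>
    using assms by (simp add: mdp_def)
  interpret density_mixture "Ms \<Otimes>\<^sub>M Ma" "\<lambda>x. enn2real (vis x)" "\<lambda>z x. enn2real (cvis z x)"
    "\<lambda>x. enn2real (tvis x)"
    using d_pos dc_pos dt_pos by (rule visit_density_mixture)
  have "\<bar>ln (enn2real (vis x) / qs x)\<bar> \<le> (SUP x. \<bar>ln (enn2real (vis x) / qs x)\<bar>)" for x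
    using L_fin by (rule cSUP_upper[rotated]) simp
  then show ?thesis
    using expected_KL_dens_lower_bound[OF qs_meas] qs_pos by (simp add: Let_def)
qed

end
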